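(* Every $x\in\mathscr X$ admits the continuous quadratic variation $\langle x\rangle_t=t$, $t\in[0,1]$, along the sequence of dyadic partitions $\mathbb T_n=\{k2^{-n}: k=0,\dots,2^n\}$, $n\ge1$.
   Context: The Faber--Schauder functions are $e_{0,0}(t):=(\min\{t,1-t\})^+$ and $e_{m,k}(t):=2^{-m/2}e_{0,0}(2^m t-k)$ for $t\in\mathbb R$, $m\ge1$, $k\in\mathbb Z$. $\mathscr X$ denotes the set of all functions $x\in C[0,1]$ of the form $x=\sum_{m=0}^\infty\sum_{k=0}^{2^m-1}\theta_{m,k}e_{m,k}$ (uniformly convergent series) with $\theta_{m,k}\in\{-1,+1\}$. For a partition $\mathbb T$ of $[0,1]$ and $t\in\mathbb T$, the successor $t'$ is $\min\{u\in\mathbb T:u>t\}$ if $t<1$ and $t'=1$ if $t=1$. For $x\in C[0,1]$ set $\langle x\rangle^n_t:=\sum_{s\in\mathbb T_n,\,s\le t}(x(s')-x(s))^2$. The function $x$ admits the continuous quadratic variation $\langle x\rangle$ along $(\mathbb T_n)$ if $\langle x\rangle_t:=\lim_{n\to\infty}\langle x\rangle^n_t$ exists for all $t\in[0,1]$ and $t\mapsto\langle x\rangle_t$ is continuous. *)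

theory Defs
  imports "HOL-Analysis.Analysis"
begin

definition fs00 :: "real \<Rightarrow> real" where
  "fs00 t = max 0 (min t (1 - t))"

definition fs :: "nat \<Rightarrow> int \<Rightarrow> real \<Rightarrow> real" where
  "fs m k t = (if m = 0 then fs00 t else 2 powr (- real m / 2) * fs00 (2 ^ m * t - real_of_int k))"

definition scrX :: "(real \<Rightarrow> real) set" where
  "scrX = {x. continuous_on {0..1} x \<and>
     (\<exists>\<theta> :: nat \<Rightarrow> int \<Rightarrow> real. (\<forall>m k. \<theta> m k \<in> {-1, 1}) \<and>
        uniform_limit {0..1}
          (\<lambda>N t. \<Sum>m<N. \<Sum>k\<in>{0..<2^m}. \<theta> m (int k) * fs m (int k) t) x sequentially)}"

definition succ_pt :: "real set \<Rightarrow> real \<Rightarrow> real" where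
  "succ_pt T t = (if t < 1 then Min {u \<in> T. u > t} else 1)"

definition qv_n :: "real set \<Rightarrow> (real \<Rightarrow> real) \<Rightarrow> real \<Rightarrow> real" where
  "qv_n T x t = (\<Sum>s\<in>{s \<in> T. s \<le> t}. (x (succ_pt T s) - x s)^2)"

definition admits_cqv :: "(nat \<Rightarrow> real set) \<Rightarrow> (real \<Rightarrow> real) \<Rightarrow> bool" where
  "admits_cqv Ts x \<longleftrightarrow> (\<forall>t\<in>{0..1}. convergent (\<lambda>n. qv_n (Ts n) x t)) \<and>
     continuous_on {0..1} (\<lambda>t. lim (\<lambda>n. qv_n (Ts n) x t))"

definition dyadic :: "nat \<Rightarrow> real set" where
  "dyadic n = {real k / 2 ^ n | k. k \<le> 2 ^ n}"

end

(*
  On the level-n dyadic grid, x only sees the first n levels of its Faber--Schauder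
  series, because e_{m,k} vanishes on that grid for m >= n.  Refining the grid
  therefore keeps the old values and puts at each new midpoint the average of its two
  neighbours plus theta * 2^(-n/2) / 2.  An increment D of level n thus splits into
  D/2 +- 2^(-n/2) / 2, and the squares of the two halves add up to D^2/2 + 2^(-n-1).
  Hence 2^n times the discrete quadratic variation up to the J-th grid point differs
  from J by at most 1 + 6n, and the quadratic variation up to t tends to t.
*)
theory Submission
  imports Defs "HOL-Real_Asymp.Real_Asymp"
begin

lemma fs00_eq_0: "t \<le> 0 \<or> 1 \<le> t \<Longrightarrow> fs00 t = 0"
  by (auto simp: fs00_def)

lemma fs00_left: "0 \<le> t \<Longrightarrow> t \<le> 1/2 \<Longrightarrow> fs00 t = t"
  by (simp add: fs00_def)

lemma fs00_right: "1/2 \<le> t \<Longrightarrow> t \<le> 1 \<Longrightarrow> fs00 t = 1 - t"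
  by (simp add: fs00_def)

lemma fs00_of_int [simp]: "fs00 (real_of_int c) = 0"
  by (rule fs00_eq_0) (cases "c \<le> 0"; simp)

lemma fs00_midpoint:
  fixes a b :: real
  assumes "a \<le> b"
    and "b \<le> 0 \<or> 1 \<le> a \<or> (0 \<le> a \<and> b \<le> 1/2) \<or> (1/2 \<le> a \<and> b \<le> 1)"
  shows "fs00 ((a + b) / 2) = (fs00 a + fs00 b) / 2"
  using assms by (elim disjE) (auto simp: fs00_eq_0 fs00_left fs00_right field_simps)

text \<open>For \<open>p \<ge> 1\<close> the kinks \<open>0, 1/2, 1\<close> of \<open>fs00\<close> are multiples of \<open>1 / 2^p\<close>,
  so \<open>fs00\<close> is affine on every cell of that grid.\<close>

lemma fs00_dyadic_midpoint:
  fixes c :: int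
  assumes "p \<ge> 1"
  shows "fs00 ((2 * real_of_int c + 1) / 2^(p+1))
    = (fs00 (real_of_int c / 2^p) + fs00 ((real_of_int c + 1) / 2^p)) / 2"
proof -
  define h :: real where "h = 2^p"
  define Q :: int where "Q = 2^(p - 1)"
  have h: "h = 2 * Q" "h > 0"
    using assms unfolding Q_def h_def by (simp_all flip: power_Suc)
  have "c + 1 \<le> 0 \<or> 2 * Q \<le> c \<or> (0 \<le> c \<and> c + 1 \<le> Q) \<or> (Q \<le> c \<and> c + 1 \<le> 2 * Q)"
    by linarith
  then have "c + 1 \<le> 0 \<or> h \<le> c \<or> (0 \<le> c \<and> c + 1 \<le> h/2) \<or> (h/2 \<le> c \<and> c + 1 \<le> h)"
    unfolding h by linarith
  then have "(real_of_int c + 1) / h \<le> 0 \<or> 1 \<le> real_of_int c / h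
      \<or> (0 \<le> real_of_int c / h \<and> (real_of_int c + 1) / h \<le> 1/2)
      \<or> (1/2 \<le> real_of_int c / h \<and> (real_of_int c + 1) / h \<le> 1)"
    using \<open>h > 0\<close> by (auto simp: field_simps)
  moreover have "(2 * real_of_int c + 1) / 2^(p+1) = (real_of_int c / h + (real_of_int c + 1) / h) / 2"
    unfolding h_def by (simp add: field_simps)
  ultimately show ?thesis
    unfolding h_def by (simp only:) (rule fs00_midpoint, simp_all add: divide_right_mono)
qed

text \<open>At level \<open>m = 0\<close> the definition of \<open>fs\<close> ignores \<open>k\<close>, hence the side condition.\<close>

lemma fs_eq_scaled:
  "m > 0 \<or> k = 0 \<Longrightarrow> fs m k t = 2 powr (- real m / 2) * fs00 (2^m * t - real_of_int k)"
  by (auto simp: fs_def)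

lemma fs_dyadic_eq_0:
  assumes "n \<le> m"
  shows "fs m k (real j / 2^n) = 0"
proof -
  have "(2::real)^m = 2^(m - n) * 2^n"
    using assms by (simp flip: power_add)
  then have "2^m * (real j / 2^n) - real_of_int k = real_of_int (2^(m - n) * int j - k)"
    by simp
  moreover have "real j / 2^n = real_of_int (int j)" if "m = 0"
    using that assms by simp
  ultimately show ?thesis
    unfolding fs_def by (metis fs00_of_int mult_zero_right)
qed

lemma fs_dyadic_midpoint:
  assumes "m < n" "m > 0 \<or> k = 0"
  shows "fs m k ((2 * real i + 1) / 2^(n+1)) = (fs m k (real i / 2^n) + fs m k ((real i + 1) / 2^n)) / 2"
proof -
  define p where "p = n - m"
  have p: "p \<ge> 1" "n = m + p"
    using assms unfolding p_def by simp_all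
  define c :: int where "c = int i - k * 2^p"
  have args: "2^m * ((2 * real i + 1) / 2^(n+1)) - real_of_int k = (2 * real_of_int c + 1) / 2^(p+1)"
    "2^m * (real i / 2^n) - real_of_int k = real_of_int c / 2^p"
    "2^m * ((real i + 1) / 2^n) - real_of_int k = (real_of_int c + 1) / 2^p"
    unfolding p(2) c_def by (simp_all add: power_add field_simps)
  show ?thesis
    unfolding fs_eq_scaled[OF assms(2)] args fs00_dyadic_midpoint[OF p(1)] by (simp add: algebra_simps)
qed

lemma fs_level_midpoint:
  fixes i k :: nat
  assumes "k < 2^n" "i < 2^n"
  shows "fs n (int k) ((2 * real i + 1) / 2^(n+1)) = (if k = i then 2 powr (- real n / 2) / 2 else 0)"
proof -
  have scaled: "n > 0 \<or> int k = 0"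
    using assms by (cases n) auto
  have arg: "2^n * ((2 * real i + 1) / 2^(n+1)) - real_of_int (int k) = real_of_int (int i - int k) + 1/2"
    by (simp add: field_simps)
  have val: "fs00 (real_of_int (int i - int k) + 1/2) = (if k = i then 1/2 else 0)"
  proof (cases "k = i")
    case False
    then have "real_of_int (int i - int k) \<ge> 1 \<or> real_of_int (int i - int k) \<le> -1"
      by linarith
    then show ?thesis
      using False by (auto intro: fs00_eq_0)
  qed (simp add: fs00_def)
  show ?thesis
    unfolding fs_eq_scaled[OF scaled] arg val by simp
qed

definition fs_partial_sum :: "(nat \<Rightarrow> int \<Rightarrow> real) \<Rightarrow> nat \<Rightarrow> real \<Rightarrow> real" where
  "fs_partial_sum \<theta> N t = (\<Sum>m<N. \<Sum>k\<in>{0..<2^m}. \<theta> m (int k) * fs m (int k) t)"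

lemma fs_partial_sum_dyadic_stable:
  assumes "n \<le> N"
  shows "fs_partial_sum \<theta> N (real j / 2^n) = fs_partial_sum \<theta> n (real j / 2^n)"
  using assms
proof (induction N rule: dec_induct)
  case (step N)
  then show ?case
    by (simp add: fs_partial_sum_def fs_dyadic_eq_0)
qed simp

lemma fs_partial_sum_midpoint:
  "fs_partial_sum \<theta> n ((2 * real i + 1) / 2^(n+1))
     = (fs_partial_sum \<theta> n (real i / 2^n) + fs_partial_sum \<theta> n ((real i + 1) / 2^n)) / 2"
proof -
  have "fs_partial_sum \<theta> n ((2 * real i + 1) / 2^(n+1))
      = (\<Sum>m<n. \<Sum>k\<in>{0..<2^m}. \<theta> m (int k) * fs m (int k) (real i / 2^n) / 2
           + \<theta> m (int k) * fs m (int k) ((real i + 1) / 2^n) / 2)"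
    unfolding fs_partial_sum_def
  proof (intro sum.cong refl)
    fix m k assume "m \<in> {..<n}" "k \<in> {0..<(2::nat)^m}"
    then have "m < n" "m > 0 \<or> int k = 0"
      by (cases m; simp)+
    then show "\<theta> m (int k) * fs m (int k) ((2 * real i + 1) / 2^(n+1))
        = \<theta> m (int k) * fs m (int k) (real i / 2^n) / 2 + \<theta> m (int k) * fs m (int k) ((real i + 1) / 2^n) / 2"
      by (subst fs_dyadic_midpoint) (simp_all add: field_simps)
  qed
  then show ?thesis
    by (simp only: fs_partial_sum_def sum.distrib sum_divide_distrib add_divide_distrib)
qed

lemma fs_partial_sum_Suc_midpoint:
  assumes "i < 2^n"
  shows "fs_partial_sum \<theta> (Suc n) ((2 * real i + 1) / 2^(n+1))
     = fs_partial_sum \<theta> n ((2 * real i + 1) / 2^(n+1)) + \<theta> n (int i) * 2 powr (- real n / 2) / 2"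
proof -
  have "(\<Sum>k\<in>{0..<2^n}. \<theta> n (int k) * fs n (int k) ((2 * real i + 1) / 2^(n+1)))
      = (\<Sum>k\<in>{0..<2^n}. if k = i then \<theta> n (int i) * 2 powr (- real n / 2) / 2 else 0)"
    using assms by (intro sum.cong refl, subst fs_level_midpoint) auto
  then show ?thesis
    using assms by (simp add: fs_partial_sum_def)
qed

locale signed_midpoint_refinement =
  fixes v :: "nat \<Rightarrow> nat \<Rightarrow> real" and \<sigma> :: "nat \<Rightarrow> nat \<Rightarrow> real"
  assumes refine_even: "i \<le> 2^n \<Longrightarrow> v (Suc n) (2 * i) = v n i"
    and refine_odd: "i < 2^n \<Longrightarrow> v (Suc n) (2 * i + 1) = (v n i + v n (i + 1)) / 2 + \<sigma> n i / 2"
    and initial_flat: "v 0 1 = v 0 0"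
    and sigma_squared: "(\<sigma> n i)^2 = 1 / 2^n"
begin

definition increment :: "nat \<Rightarrow> nat \<Rightarrow> real" where
  "increment n j = v n (Suc j) - v n j"

lemma increment_refine:
  assumes "i < 2^n"
  shows "increment (Suc n) (2 * i) = increment n i / 2 + \<sigma> n i / 2"
    and "increment (Suc n) (2 * i + 1) = increment n i / 2 - \<sigma> n i / 2"
proof -
  have "Suc (2 * i) = 2 * i + 1" "Suc (2 * i + 1) = 2 * (i + 1)"
    by simp_all
  then show "increment (Suc n) (2 * i) = increment n i / 2 + \<sigma> n i / 2"
    and "increment (Suc n) (2 * i + 1) = increment n i / 2 - \<sigma> n i / 2"
    using assms refine_even[of i n] refine_even[of "i + 1" n] refine_odd[OF assms]
    unfolding increment_def by (simp_all add: field_simps)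
qed

lemma increment_squared_le:
  "j < 2^n \<Longrightarrow> (increment n j)^2 \<le> 6 / 2^n"
proof (induction n arbitrary: j)
  case 0
  then show ?case
    using initial_flat by (simp add: increment_def)
next
  case (Suc n)
  obtain i where j: "j = 2 * i \<or> j = 2 * i + 1"
    by (metis evenE oddE)
  then have i: "i < 2^n"
    using Suc.prems by auto
  define D where "D = increment n i"
  have "(D / 2 + u / 2)^2 \<le> 6 / 2^Suc n" if "u^2 = 1 / 2^n" for u
  proof -
    \<comment> \<open>\<open>(a + b)\<^sup>2 \<le> 4/3 a\<^sup>2 + 4 b\<^sup>2\<close>, since the difference is \<open>(a - 3b)\<^sup>2 / 3\<close>\<close>
    have "(D / 2 + u / 2)^2 \<le> D^2 / 3 + u^2"
      using zero_le_power2[of "D - 3 * u"] by (simp add: power2_eq_square field_simps)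
    also have "\<dots> \<le> 2 / 2^n + 1 / 2^n"
      using Suc.IH[OF i] that unfolding D_def by simp
    finally show ?thesis
      by simp
  qed
  then show ?case
    using j increment_refine[OF i] sigma_squared[of n i] unfolding D_def
    by (metis diff_conv_add_uminus minus_divide_left power2_minus)
qed

lemma increment_pair_squared:
  assumes "i < 2^n"
  shows "(increment (Suc n) (2 * i))^2 + (increment (Suc n) (2 * i + 1))^2
     = (increment n i)^2 / 2 + 1 / 2^Suc n"
proof -
  have "(d / 2 + s / 2)^2 + (d / 2 - s / 2)^2 = d^2 / 2 + s^2 / 2" for d s :: real
    by (simp add: power2_eq_square field_simps)
  then show ?thesis
    unfolding increment_refine[OF assms] by (simp add: sigma_squared)
qed

lemma scaled_sum_increment_squared_double:
  assumes "I \<le> 2^n"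
  shows "2^Suc n * (\<Sum>j<2 * I. (increment (Suc n) j)^2) - real (2 * I)
     = 2^n * (\<Sum>j<I. (increment n j)^2) - I"
proof -
  have "(\<Sum>j<2 * I. (increment (Suc n) j)^2)
      = (\<Sum>i<I. (increment (Suc n) (2 * i))^2 + (increment (Suc n) (2 * i + 1))^2)"
    by (induction I) (simp_all add: algebra_simps)
  also have "\<dots> = (\<Sum>i<I. (increment n i)^2 / 2 + 1 / 2^Suc n)"
    using assms by (intro sum.cong refl increment_pair_squared) auto
  also have "\<dots> = (\<Sum>i<I. (increment n i)^2) / 2 + I / 2^Suc n"
    by (simp add: sum.distrib sum_divide_distrib)
  finally show ?thesis
    by (simp add: field_simps)
qed

lemma scaled_sum_increment_squared_error:
  "J \<le> 2^n \<Longrightarrow> \<bar>2^n * (\<Sum>j<J. (increment n j)^2) - J\<bar> \<le> 1 + 6 * real n"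
proof (induction n arbitrary: J)
  case 0
  then have "J = 0 \<or> J = 1"
    by auto
  then show ?case
    using initial_flat by (auto simp: increment_def)
next
  case (Suc n)
  obtain I where J: "J = 2 * I \<or> J = 2 * I + 1"
    by (metis evenE oddE)
  then have I: "I \<le> 2^n"
    using Suc.prems by auto
  note double = scaled_sum_increment_squared_double[OF I]
  show ?case
  proof (cases "J = 2 * I")
    case True
    then show ?thesis
      using double Suc.IH[OF I] by simp
  next
    case False
    then have "J = Suc (2 * I)" and odd: "2 * I < 2^Suc n"
      using J Suc.prems by auto
    have "0 \<le> 2^Suc n * (increment (Suc n) (2 * I))^2"
      by simp
    moreover have "2^Suc n * (increment (Suc n) (2 * I))^2 \<le> 6"
      using increment_squared_le[OF odd] by (simp add: field_simps)
    moreover have "2^Suc n * (\<Sum>j<J. (increment (Suc n) j)^2) - J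
        = (2^n * (\<Sum>j<I. (increment n j)^2) - I) + (2^Suc n * (increment (Suc n) (2 * I))^2 - 1)"
      using double \<open>J = Suc (2 * I)\<close> by (simp add: algebra_simps)
    ultimately have "\<bar>2^Suc n * (\<Sum>j<J. (increment (Suc n) j)^2) - J\<bar> \<le> (1 + 6 * real n) + 6"
      using Suc.IH[OF I] by linarith
    then show ?thesis
      by simp
  qed
qed

end

lemma finite_dyadic: "finite (dyadic n)"
proof -
  have "dyadic n = (\<lambda>k. real k / 2^n) ` {..2^n}"
    unfolding dyadic_def by auto
  then show ?thesis
    by simp
qed

lemma succ_pt_dyadic:
  assumes "j < 2^n"
  shows "succ_pt (dyadic n) (real j / 2^n) = real (Suc j) / 2^n"
proof -
  have "Min {u \<in> dyadic n. u > real j / 2^n} = real (Suc j) / 2^n"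
  proof (rule Min_eqI)
    show "finite {u \<in> dyadic n. u > real j / 2^n}"
      using finite_dyadic by simp
    have "real (Suc j) / 2^n \<in> dyadic n"
      using Suc_leI[OF assms] unfolding dyadic_def by blast
    then show "real (Suc j) / 2^n \<in> {u \<in> dyadic n. u > real j / 2^n}"
      by (simp add: divide_strict_right_mono)
  next
    fix y assume "y \<in> {u \<in> dyadic n. u > real j / 2^n}"
    then obtain k where "y = real k / 2^n" "real j < real k"
      unfolding dyadic_def by (auto simp: divide_less_cancel)
    then show "real (Suc j) / 2^n \<le> y"
      by (simp add: divide_right_mono)
  qed
  moreover have "real j / 2^n < 1"
    using assms by (simp add: field_simps)
  ultimately show ?thesis
    unfolding succ_pt_def by simp
qed

lemma qv_n_dyadic:
  fixes x :: "real \<Rightarrow> real"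
  assumes "0 \<le> t" "t \<le> 1"
  obtains K where "K \<le> 2^n" "t * 2^n \<le> K" "K \<le> t * 2^n + 1"
    and "qv_n (dyadic n) x t = (\<Sum>j<K. (x (real (Suc j) / 2^n) - x (real j / 2^n))^2)"
proof
  define L where "L = nat \<lfloor>t * 2^n\<rfloor> + 1"
  have "real (nat \<lfloor>t * 2^n\<rfloor>) = \<lfloor>t * 2^n\<rfloor>"
    using assms by simp
  then have L: "t * 2^n < L" "L \<le> t * 2^n + 1"
    unfolding L_def of_nat_add of_nat_1 by linarith+
  have le_t_iff: "real j / 2^n \<le> t \<longleftrightarrow> j < L" for j
    using assms unfolding L_def by (simp add: divide_le_eq le_nat_iff le_floor_iff less_Suc_eq_le)
  have t_le: "t * 2^n \<le> 2^n"
    using assms by (simp add: mult_left_le_one_le)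
  then have "real L \<le> 2^n + 1"
    using L by linarith
  then have "L \<le> 2^n + 1"
    using of_nat_le_iff[of L "2^n + 1", where 'a=real] by simp
  then have "{s \<in> dyadic n. s \<le> t} = (\<lambda>j. real j / 2^n) ` {..<L}"
  proof (intro equalityI subsetI)
    fix s assume "s \<in> {s \<in> dyadic n. s \<le> t}"
    then obtain k where "s = real k / 2^n" "s \<le> t"
      unfolding dyadic_def by blast
    then show "s \<in> (\<lambda>j. real j / 2^n) ` {..<L}"
      using le_t_iff by blast
  next
    fix s assume "s \<in> (\<lambda>j. real j / 2^n) ` {..<L}"
    then obtain j where "s = real j / 2^n" "j < L"
      by blast
    then show "s \<in> {s \<in> dyadic n. s \<le> t}"
      using le_t_iff \<open>L \<le> 2^n + 1\<close> unfolding dyadic_def by auto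
  qed
  moreover have "inj_on (\<lambda>j. real j / 2^n) {..<L}"
    by (auto simp: inj_on_def)
  ultimately have "qv_n (dyadic n) x t = (\<Sum>j<L. (x (succ_pt (dyadic n) (real j / 2^n)) - x (real j / 2^n))^2)"
    unfolding qv_n_def by (simp add: sum.reindex)
  also have "\<dots> = (\<Sum>j<L. if j \<in> {..<2^n} then (x (real (Suc j) / 2^n) - x (real j / 2^n))^2 else 0)"
  proof (intro sum.cong refl)
    fix j assume "j \<in> {..<L}"
    then have "j \<le> 2^n"
      using \<open>L \<le> 2^n + 1\<close> by simp
    \<comment> \<open>\<open>succ_pt (dyadic n) 1 = 1\<close>, so the last grid point contributes nothing\<close>
    then show "(x (succ_pt (dyadic n) (real j / 2^n)) - x (real j / 2^n))^2
        = (if j \<in> {..<2^n} then (x (real (Suc j) / 2^n) - x (real j / 2^n))^2 else 0)"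
      using succ_pt_dyadic[of j n] by (auto simp: succ_pt_def)
  qed
  also have "\<dots> = (\<Sum>j<min L (2^n). (x (real (Suc j) / 2^n) - x (real j / 2^n))^2)"
    by (simp only: sum.inter_restrict[OF finite_lessThan, symmetric] greaterThan_Int_greaterThan)
  finally show "qv_n (dyadic n) x t = (\<Sum>j<min L (2^n). (x (real (Suc j) / 2^n) - x (real j / 2^n))^2)" .
  show "min L (2^n) \<le> 2^n" "real (min L (2^n)) \<le> t * 2^n + 1"
    using L by auto
  show "t * 2^n \<le> real (min L (2^n))"
    using L t_le by (simp add: of_nat_min)
qed

lemma admits_cqvI:
  assumes "\<forall>t\<in>{0..1}. (\<lambda>n. qv_n (Ts n) x t) \<longlonglongrightarrow> f t" and "continuous_on {0..1} f"
  shows "admits_cqv Ts x"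
proof -
  have "continuous_on {0..1} (\<lambda>t. lim (\<lambda>n. qv_n (Ts n) x t)) = continuous_on {0..1} f"
    using assms(1) by (intro continuous_on_cong refl limI) blast
  then show ?thesis
    using assms unfolding admits_cqv_def convergent_def by blast
qed

lemma qv_n_dyadic_tendsto:
  assumes "signed_midpoint_refinement (\<lambda>n j. x (real j / 2^n)) \<sigma>" and "t \<in> {0..1}"
  shows "(\<lambda>n. qv_n (dyadic n) x t) \<longlonglongrightarrow> t"
proof -
  interpret signed_midpoint_refinement "\<lambda>n j. x (real j / 2^n)" \<sigma>
    by (fact assms(1))
  have t: "0 \<le> t" "t \<le> 1"
    using assms(2) by auto
  have bound: "\<bar>qv_n (dyadic n) x t - t\<bar> \<le> (2 + 6 * real n) / 2^n" for n
  proof -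
    obtain K where K: "K \<le> 2^n" "t * 2^n \<le> K" "K \<le> t * 2^n + 1"
      and qv: "qv_n (dyadic n) x t = (\<Sum>j<K. (x (real (Suc j) / 2^n) - x (real j / 2^n))^2)"
      by (rule qv_n_dyadic[OF t])
    have error: "\<bar>2^n * qv_n (dyadic n) x t - K\<bar> \<le> 1 + 6 * real n"
      using scaled_sum_increment_squared_error[OF K(1)] unfolding qv increment_def .
    have "2^n * \<bar>qv_n (dyadic n) x t - t\<bar> = \<bar>2^n * (qv_n (dyadic n) x t - t)\<bar>"
      by (simp add: abs_mult)
    also have "\<dots> = \<bar>(2^n * qv_n (dyadic n) x t - K) + (K - t * 2^n)\<bar>"
      by (simp add: algebra_simps)
    also have "\<dots> \<le> 2 + 6 * real n"
      using error K(2,3) by linarith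
    finally show ?thesis
      by (simp add: pos_le_divide_eq mult.commute)
  qed
  have "(\<lambda>n. (2 + 6 * real n) / 2^n) \<longlonglongrightarrow> 0"
    by real_asymp
  then have "(\<lambda>n. qv_n (dyadic n) x t - t) \<longlonglongrightarrow> 0"
    by (rule Lim_null_comparison[OF always_eventually, rotated]) (simp add: bound)
  then show ?thesis
    by (rule LIM_zero_cancel)
qed

lemma limit_fs_partial_sum_at_dyadic:
  assumes "(\<lambda>N. fs_partial_sum \<theta> N (real j / 2^n)) \<longlonglongrightarrow> y"
  shows "y = fs_partial_sum \<theta> n (real j / 2^n)"
proof -
  have "eventually (\<lambda>N. fs_partial_sum \<theta> N (real j / 2^n) = fs_partial_sum \<theta> n (real j / 2^n)) sequentially"
    unfolding eventually_sequentially using fs_partial_sum_dyadic_stable by blast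
  then have "(\<lambda>N. fs_partial_sum \<theta> N (real j / 2^n)) \<longlonglongrightarrow> fs_partial_sum \<theta> n (real j / 2^n)"
    by (rule tendsto_eventually)
  then show ?thesis
    using assms by (rule LIMSEQ_unique[rotated])
qed

lemma scrX_dyadic_refinement:
  assumes "x \<in> scrX"
  obtains \<sigma> where "signed_midpoint_refinement (\<lambda>n j. x (real j / 2^n)) \<sigma>"
proof -
  obtain \<theta> where \<theta>: "\<forall>m k. \<theta> m k \<in> {-1, 1}"
    and lim: "uniform_limit {0..1} (fs_partial_sum \<theta>) x sequentially"
    using assms unfolding scrX_def fs_partial_sum_def[abs_def] by blast
  have x_dyadic: "x (real j / 2^n) = fs_partial_sum \<theta> n (real j / 2^n)" if "j \<le> 2^n" for j n
    using that by (intro limit_fs_partial_sum_at_dyadic tendsto_uniform_limitI[OF lim]) (simp add: field_simps)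
  have "signed_midpoint_refinement (\<lambda>n j. x (real j / 2^n)) (\<lambda>n i. \<theta> n (int i) * 2 powr (- real n / 2))"
  proof
    fix n i :: nat
    assume i: "i < 2^n"
    have "x (real (2 * i + 1) / 2^Suc n) = fs_partial_sum \<theta> (Suc n) ((2 * real i + 1) / 2^(n+1))"
      using x_dyadic[of "2 * i + 1" "Suc n"] i by (simp add: algebra_simps)
    also have "\<dots> = (fs_partial_sum \<theta> n (real i / 2^n) + fs_partial_sum \<theta> n ((real i + 1) / 2^n)) / 2
        + \<theta> n (int i) * 2 powr (- real n / 2) / 2"
      unfolding fs_partial_sum_Suc_midpoint[OF i] fs_partial_sum_midpoint ..
    also have "fs_partial_sum \<theta> n (real i / 2^n) = x (real i / 2^n)"
      using x_dyadic[of i n] i by simp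
    also have "fs_partial_sum \<theta> n ((real i + 1) / 2^n) = x (real (i + 1) / 2^n)"
      using x_dyadic[of "i + 1" n] i by (simp add: add.commute)
    finally show "x (real (2 * i + 1) / 2^Suc n)
        = (x (real i / 2^n) + x (real (i + 1) / 2^n)) / 2 + \<theta> n (int i) * 2 powr (- real n / 2) / 2" .
  next
    show "x (real 1 / 2^0) = x (real 0 / 2^0)"
      using x_dyadic[of 0 0] x_dyadic[of 1 0] by (simp add: fs_partial_sum_def)
  next
    fix n i :: nat
    have "\<theta> n (int i) \<in> {-1, 1}"
      using \<theta> by blast
    then have "(\<theta> n (int i))^2 = 1"
      by auto
    moreover have "(2 powr (- real n / 2))^2 = 2 powr (- real n)"
      by (simp add: power2_eq_square flip: powr_add)
    moreover have "2 powr (- real n) = 1 / 2^n"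
      by (simp add: powr_minus_divide powr_realpow)
    ultimately show "(\<theta> n (int i) * 2 powr (- real n / 2))^2 = 1 / 2^n"
      by (simp add: power_mult_distrib)
  qed simp
  then show ?thesis
    by (rule that)
qed

theorem proposition2p6:
  assumes "x \<in> scrX"
  shows "admits_cqv (\<lambda>n. dyadic (Suc n)) x \<and>
         (\<forall>t\<in>{0..1}. (\<lambda>n. qv_n (dyadic (Suc n)) x t) \<longlonglongrightarrow> t)"
proof -
  obtain \<sigma> where "signed_midpoint_refinement (\<lambda>n j. x (real j / 2^n)) \<sigma>"
    using scrX_dyadic_refinement[OF assms] .
  then have lim: "\<forall>t\<in>{0..1}. (\<lambda>n. qv_n (dyadic (Suc n)) x t) \<longlonglongrightarrow> t"
    using qv_n_dyadic_tendsto LIMSEQ_Suc by blast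
  moreover have "admits_cqv (\<lambda>n. dyadic (Suc n)) x"
    using lim by (rule admits_cqvI[OF _ continuous_on_id])
  ultimately show ?thesis
    by blast
qed

end
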